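(* Let $X$ be an $M$-thin combinatorial $2$-complex and $\lambda>0$. Let $\mathcal H\le\mathrm{Aut}(X)$, let $Y\subset X$ be an $\mathcal H$-cocompact subcomplex, let $R$ be a $2$-cell of $X$ that is a missing $3$-shell of $Y$ with inner path $S$ and outer path $Q$, and let $Y'=Y\cup\bigcup_{h\in\mathcal H}hR$ be the $(\mathcal H,R)$-enlargement of $Y$. If $|S|<3\lambda|\partial R|$ and $3\lambda M<\frac{1}{|\mathrm{Aut}_{\mathcal H}(R)|}$, then $\mathrm{per}(Y',\mathcal H)<\mathrm{per}(Y,\mathcal H)$.
   Context: $\mathrm{Aut}(X)$ is the group of cellular automorphisms. A side at a $1$-cell $x$ is a pair $(R,r)$ with $R$ a $2$-cell and $r$ a $1$-cell of the boundary cycle $\partial R$ mapping to $x$; $X$ is $M$-thin if each $1$-cell has at most $M$ sides. For a subcomplex $Z$, a side at $x$ lifts to $Z$ if $x\subset Z$ and $(R,r)\to(X,x)$ factors through $Z$; $\mathrm{Missing}_X(Z,x)$ is the set of sides at $x$ not lifting to $Z$. $Z$ is $\mathcal H$-cocompact if $\mathcal H$-invariant with finitely many $\mathcal H$-orbits of cells, and then $\mathrm{per}(Z,\mathcal H)=\sum_i|\mathrm{Missing}_X(Z,z_i)|$ with $z_i$ representatives of the $\mathcal H$-orbits of $1$-cells of $Z$. A piece is a nontrivial path factoring through boundary cycles of two $2$-cells in essentially distinct ways (no compatible homeomorphism of the boundary cycles). A missing $3$-shell of $Y$ is a $2$-cell $R$ of $X$ not contained in $Y$ with $\partial R=QS$,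 where the outer path $Q$ lies in $Y$ and the inner path $S$ is a concatenation of at most $3$ pieces. $\mathrm{Aut}_{\mathcal H}(R)=\mathrm{Stab}_{\mathcal H}(R)/\mathrm{Fix}_{\mathcal H}(R)$, with $\mathrm{Fix}_{\mathcal H}(R)$ the pointwise stabilizer. *)

theory Defs
  imports Complex_Main
begin

text \<open>A combinatorial 2-complex: 0-cells, 1-cells (with endpoints), and 2-cells, each
2-cell being attached along a closed combinatorial path (its boundary cycle), given as a
nonempty cyclic list of oriented 1-cells.  An oriented 1-cell is a pair (e, b): b = True
means e is traversed from src e to tgt e.  Position i of the list is the i-th 1-cell of the
boundary cycle (a circle subdivided into n 1-cells; the i-th goes from vertex i to i+1 mod n).\<close>

record ('v,'e,'f) complex2 =
  verts :: "'v set"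
  edges :: "'e set"
  faces :: "'f set"
  src :: "'e \<Rightarrow> 'v"
  tgt :: "'e \<Rightarrow> 'v"
  bd :: "'f \<Rightarrow> ('e \<times> bool) list"

definition oe_start :: "('v,'e,'f) complex2 \<Rightarrow> 'e \<times> bool \<Rightarrow> 'v" where
  "oe_start X oe = (if snd oe then src X (fst oe) else tgt X (fst oe))"

definition oe_end :: "('v,'e,'f) complex2 \<Rightarrow> 'e \<times> bool \<Rightarrow> 'v" where
  "oe_end X oe = (if snd oe then tgt X (fst oe) else src X (fst oe))"

definition oe_flip :: "bool \<Rightarrow> 'e \<times> bool \<Rightarrow> 'e \<times> bool" where
  "oe_flip r oe = (fst oe, snd oe \<noteq> r)"

definition complex2 :: "('v,'e,'f) complex2 \<Rightarrow> bool" where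
  "complex2 X \<longleftrightarrow>
     (\<forall>e\<in>edges X. src X e \<in> verts X \<and> tgt X e \<in> verts X) \<and>
     (\<forall>f\<in>faces X. bd X f \<noteq> [] \<and> (\<forall>oe\<in>set (bd X f). fst oe \<in> edges X) \<and>
        (\<forall>i<length (bd X f).
           oe_end X (bd X f ! i) = oe_start X (bd X f ! (Suc i mod length (bd X f)))))"

definition sides :: "('v,'e,'f) complex2 \<Rightarrow> 'e \<Rightarrow> ('f \<times> nat) set" where
  "sides X x = {(R, i). R \<in> faces X \<and> i < length (bd X R) \<and> fst (bd X R ! i) = x}"

definition thin :: "('v,'e,'f) complex2 \<Rightarrow> nat \<Rightarrow> bool" where
  "thin X M \<longleftrightarrow> (\<forall>x\<in>edges X. finite (sides X x) \<and> card (sides X x) \<le> M)"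

text \<open>Combinatorial automorphisms of a cycle of length n (acting on the indices of its 1-cells):
rotation i \<mapsto> i + k, or reflection i \<mapsto> k - 1 - i (which reverses orientation).\<close>

definition dmap :: "nat \<Rightarrow> nat \<Rightarrow> bool \<Rightarrow> nat \<Rightarrow> nat" where
  "dmap n k r i = (if r then (k + (n - 1 - i)) mod n else (i + k) mod n)"

text \<open>A cellular automorphism: maps on 0-, 1- and 2-cells; cflip e records whether the 1-cell e
is mapped with reversed orientation; for a 2-cell f, (cfmap f, cfrev f) is the induced
combinatorial homeomorphism of the boundary cycle of f onto that of its image.  Values
outside the cells of X are normalised to the identity, so that automorphisms of X are
determined by their action on X.\<close>

record ('v,'e,'f) caut =
  cv :: "'v \<Rightarrow> 'v"
  ce :: "'e \<Rightarrow> 'e"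
  cflip :: "'e \<Rightarrow> bool"
  cf :: "'f \<Rightarrow> 'f"
  cfmap :: "'f \<Rightarrow> nat \<Rightarrow> nat"
  cfrev :: "'f \<Rightarrow> bool"

definition aut_oe :: "('v,'e,'f) caut \<Rightarrow> 'e \<times> bool \<Rightarrow> 'e \<times> bool" where
  "aut_oe h oe = (ce h (fst oe), snd oe \<noteq> cflip h (fst oe))"

definition is_aut :: "('v,'e,'f) complex2 \<Rightarrow> ('v,'e,'f) caut \<Rightarrow> bool" where
  "is_aut X h \<longleftrightarrow>
     bij_betw (cv h) (verts X) (verts X) \<and>
     bij_betw (ce h) (edges X) (edges X) \<and>
     bij_betw (cf h) (faces X) (faces X) \<and>
     (\<forall>v. v \<notin> verts X \<longrightarrow> cv h v = v) \<and>
     (\<forall>e. e \<notin> edges X \<longrightarrow> ce h e = e \<and> \<not> cflip h e) \<and>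
     (\<forall>f. f \<notin> faces X \<longrightarrow> cf h f = f \<and> cfmap h f = id \<and> \<not> cfrev h f) \<and>
     (\<forall>e\<in>edges X.
        (if cflip h e then src X (ce h e) = cv h (tgt X e) \<and> tgt X (ce h e) = cv h (src X e)
         else src X (ce h e) = cv h (src X e) \<and> tgt X (ce h e) = cv h (tgt X e))) \<and>
     (\<forall>f\<in>faces X. let n = length (bd X f) in
        length (bd X (cf h f)) = n \<and>
        (\<exists>k<n. \<forall>i<n. cfmap h f i = dmap n k (cfrev h f) i) \<and>
        (\<forall>i. n \<le> i \<longrightarrow> cfmap h f i = i) \<and>
        (\<forall>i<n. bd X (cf h f) ! (cfmap h f i) = oe_flip (cfrev h f) (aut_oe h (bd X f ! i))))"

definition aut_id :: "('v,'e,'f) caut" where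
  "aut_id = \<lparr>cv = id, ce = id, cflip = (\<lambda>_. False), cf = id, cfmap = (\<lambda>_. id),
             cfrev = (\<lambda>_. False)\<rparr>"

definition aut_comp :: "('v,'e,'f) caut \<Rightarrow> ('v,'e,'f) caut \<Rightarrow> ('v,'e,'f) caut" where
  "aut_comp h g = \<lparr>cv = cv h \<circ> cv g, ce = ce h \<circ> ce g,
                   cflip = (\<lambda>e. cflip g e \<noteq> cflip h (ce g e)),
                   cf = cf h \<circ> cf g,
                   cfmap = (\<lambda>f. cfmap h (cf g f) \<circ> cfmap g f),
                   cfrev = (\<lambda>f. cfrev g f \<noteq> cfrev h (cf g f))\<rparr>"

definition aut_subgroup :: "('v,'e,'f) complex2 \<Rightarrow> ('v,'e,'f) caut set \<Rightarrow> bool" where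
  "aut_subgroup X H \<longleftrightarrow>
     (\<forall>h\<in>H. is_aut X h) \<and> aut_id \<in> H \<and>
     (\<forall>g\<in>H. \<forall>h\<in>H. aut_comp g h \<in> H) \<and>
     (\<forall>h\<in>H. \<exists>g\<in>H. aut_comp g h = aut_id \<and> aut_comp h g = aut_id)"

record ('v,'e,'f) subcx =
  zv :: "'v set"
  ze :: "'e set"
  zf :: "'f set"

definition is_subcomplex :: "('v,'e,'f) complex2 \<Rightarrow> ('v,'e,'f) subcx \<Rightarrow> bool" where
  "is_subcomplex X Z \<longleftrightarrow>
     zv Z \<subseteq> verts X \<and> ze Z \<subseteq> edges X \<and> zf Z \<subseteq> faces X \<and>
     (\<forall>e\<in>ze Z. src X e \<in> zv Z \<and> tgt X e \<in> zv Z) \<and>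
     (\<forall>f\<in>zf Z. \<forall>oe\<in>set (bd X f). fst oe \<in> ze Z)"

text \<open>The side s = (R, r) at x lifts to the subcomplex Z: x lies in Z and the map of the
2-cell R into X factors through Z, i.e. R is a 2-cell of Z.\<close>
definition lifts_to :: "('v,'e,'f) subcx \<Rightarrow> 'e \<Rightarrow> 'f \<times> nat \<Rightarrow> bool" where
  "lifts_to Z x s \<longleftrightarrow> x \<in> ze Z \<and> fst s \<in> zf Z"

definition Missing :: "('v,'e,'f) complex2 \<Rightarrow> ('v,'e,'f) subcx \<Rightarrow> 'e \<Rightarrow> ('f \<times> nat) set" where
  "Missing X Z x = {s \<in> sides X x. \<not> lifts_to Z x s}"

definition vert_orbit :: "('v,'e,'f) caut set \<Rightarrow> 'v \<Rightarrow> 'v set" where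
  "vert_orbit H v = {cv h v | h. h \<in> H}"
definition edge_orbit :: "('v,'e,'f) caut set \<Rightarrow> 'e \<Rightarrow> 'e set" where
  "edge_orbit H x = {ce h x | h. h \<in> H}"
definition face_orbit :: "('v,'e,'f) caut set \<Rightarrow> 'f \<Rightarrow> 'f set" where
  "face_orbit H f = {cf h f | h. h \<in> H}"

definition H_invariant :: "('v,'e,'f) caut set \<Rightarrow> ('v,'e,'f) subcx \<Rightarrow> bool" where
  "H_invariant H Z \<longleftrightarrow> (\<forall>h\<in>H. cv h ` zv Z \<subseteq> zv Z \<and> ce h ` ze Z \<subseteq> ze Z \<and> cf h ` zf Z \<subseteq> zf Z)"

definition H_cocompact :: "('v,'e,'f) caut set \<Rightarrow> ('v,'e,'f) subcx \<Rightarrow> bool" where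
  "H_cocompact H Z \<longleftrightarrow> H_invariant H Z \<and>
     finite (vert_orbit H ` zv Z) \<and> finite (edge_orbit H ` ze Z) \<and> finite (face_orbit H ` zf Z)"

definition per :: "('v,'e,'f) complex2 \<Rightarrow> ('v,'e,'f) caut set \<Rightarrow> ('v,'e,'f) subcx \<Rightarrow> nat" where
  "per X H Z = (\<Sum>Ob\<in>edge_orbit H ` ze Z. card (Missing X Z (SOME z. z \<in> Ob)))"

definition cyc_start :: "nat \<Rightarrow> nat \<times> bool \<Rightarrow> nat" where
  "cyc_start n c = (if snd c then fst c else Suc (fst c) mod n)"
definition cyc_end :: "nat \<Rightarrow> nat \<times> bool \<Rightarrow> nat" where
  "cyc_end n c = (if snd c then Suc (fst c) mod n else fst c)"

definition is_cyc_path :: "nat \<Rightarrow> (nat \<times> bool) list \<Rightarrow> bool" where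
  "is_cyc_path n l \<longleftrightarrow> (\<forall>c\<in>set l. fst c < n) \<and>
     (\<forall>j. Suc j < length l \<longrightarrow> cyc_end n (l ! j) = cyc_start n (l ! Suc j))"

definition cyc_oe :: "('v,'e,'f) complex2 \<Rightarrow> 'f \<Rightarrow> nat \<times> bool \<Rightarrow> 'e \<times> bool" where
  "cyc_oe X R c = oe_flip (\<not> snd c) (bd X R ! fst c)"

definition is_lift :: "('v,'e,'f) complex2 \<Rightarrow> 'f \<Rightarrow> ('e \<times> bool) list \<Rightarrow> (nat \<times> bool) list \<Rightarrow> bool" where
  "is_lift X R P l \<longleftrightarrow> R \<in> faces X \<and> is_cyc_path (length (bd X R)) l \<and> map (cyc_oe X R) l = P"

text \<open>A combinatorial homeomorphism from the boundary cycle of R1 to that of R2 commuting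
with their maps to X.\<close>
definition compat_iso :: "('v,'e,'f) complex2 \<Rightarrow> 'f \<Rightarrow> 'f \<Rightarrow> nat \<Rightarrow> bool \<Rightarrow> bool" where
  "compat_iso X R1 R2 k r \<longleftrightarrow> length (bd X R1) = length (bd X R2) \<and> k < length (bd X R1) \<and>
     (\<forall>i<length (bd X R1). bd X R2 ! dmap (length (bd X R1)) k r i = oe_flip r (bd X R1 ! i))"

definition dih_oe :: "nat \<Rightarrow> nat \<Rightarrow> bool \<Rightarrow> nat \<times> bool \<Rightarrow> nat \<times> bool" where
  "dih_oe n k r c = (dmap n k r (fst c), snd c \<noteq> r)"

definition is_piece :: "('v,'e,'f) complex2 \<Rightarrow> ('e \<times> bool) list \<Rightarrow> bool" where
  "is_piece X P \<longleftrightarrow> P \<noteq> [] \<and>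
     (\<exists>R1 R2 l1 l2. is_lift X R1 P l1 \<and> is_lift X R2 P l2 \<and>
        \<not> (\<exists>k r. compat_iso X R1 R2 k r \<and> map (dih_oe (length (bd X R1)) k r) l1 = l2))"

definition bd_readings :: "('v,'e,'f) complex2 \<Rightarrow> 'f \<Rightarrow> ('e \<times> bool) list set" where
  "bd_readings X R = {rotate k (bd X R) | k. True} \<union>
                     {rev (map (oe_flip True) (rotate k (bd X R))) | k. True}"

definition missing_3shell :: "('v,'e,'f) complex2 \<Rightarrow> ('v,'e,'f) subcx \<Rightarrow> 'f \<Rightarrow>
    ('e \<times> bool) list \<Rightarrow> ('e \<times> bool) list \<Rightarrow> bool" where
  "missing_3shell X Y R Q S \<longleftrightarrow>
     R \<in> faces X \<and> R \<notin> zf Y \<and> Q @ S \<in> bd_readings X R \<and>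
     set (map fst Q) \<subseteq> ze Y \<and> oe_start X (hd (Q @ S)) \<in> zv Y \<and>
     (\<exists>Ps. length Ps \<le> 3 \<and> S = concat Ps \<and> (\<forall>P\<in>set Ps. is_piece X P))"

definition stab_H :: "('v,'e,'f) caut set \<Rightarrow> 'f \<Rightarrow> ('v,'e,'f) caut set" where
  "stab_H H R = {h \<in> H. cf h R = R}"

definition fixes_cell :: "('v,'e,'f) complex2 \<Rightarrow> ('v,'e,'f) caut \<Rightarrow> 'f \<Rightarrow> bool" where
  "fixes_cell X h R \<longleftrightarrow> cf h R = R \<and> \<not> cfrev h R \<and>
     (\<forall>i<length (bd X R). cfmap h R i = i) \<and>
     (\<forall>oe\<in>set (bd X R). ce h (fst oe) = fst oe \<and> \<not> cflip h (fst oe) \<and>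
        cv h (oe_start X oe) = oe_start X oe)"

definition fix_H :: "('v,'e,'f) complex2 \<Rightarrow> ('v,'e,'f) caut set \<Rightarrow> 'f \<Rightarrow> ('v,'e,'f) caut set" where
  "fix_H X H R = {h \<in> H. fixes_cell X h R}"

text \<open>Aut_H(R) = Stab_H(R) / Fix_H(R), as the set of left cosets.\<close>
definition aut_H :: "('v,'e,'f) complex2 \<Rightarrow> ('v,'e,'f) caut set \<Rightarrow> 'f \<Rightarrow> ('v,'e,'f) caut set set" where
  "aut_H X H R = {(\<lambda>f. aut_comp g f) ` fix_H X H R | g. g \<in> stab_H H R}"

definition enlargement :: "('v,'e,'f) complex2 \<Rightarrow> ('v,'e,'f) caut set \<Rightarrow> ('v,'e,'f) subcx \<Rightarrow> 'f \<Rightarrow> ('v,'e,'f) subcx" where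
  "enlargement X H Y R =
     \<lparr>zv = zv Y \<union> (\<Union>h\<in>H. oe_start X ` set (bd X (cf h R))),
      ze = ze Y \<union> (\<Union>h\<in>H. fst ` set (bd X (cf h R))),
      zf = zf Y \<union> (\<lambda>h. cf h R) ` H\<rparr>"

end

theory Submission
  imports Defs "HOL-Library.Multiset"
begin

text \<open>Every 1-cell of \<open>\<partial>R\<close> lying in \<open>Y\<close> contributes a side of some translate \<open>hR\<close> which is
missing from \<open>Y\<close> at a representative of its orbit but present in \<open>Y'\<close>; at most
\<open>|Aut\<^sub>H(R)|\<close> such 1-cells give the same side, so the perimeter drops by at least
\<open>(|\<partial>R| - |S|) / |Aut\<^sub>H(R)|\<close>.  Only the 1-cells of \<open>S\<close> may be new orbits of \<open>Y'\<close>, and each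
of them contributes at most \<open>M - 1\<close> missing sides, and \<open>|Aut\<^sub>H(R)| M |S| < |\<partial>R|\<close> makes
the gain exceed the loss.\<close>

lemma aut_comp_simps [simp]:
  "ce (aut_comp h g) x = ce h (ce g x)"
  "cf (aut_comp h g) f = cf h (cf g f)"
  "cfmap (aut_comp h g) f i = cfmap h (cf g f) (cfmap g f i)"
  by (simp_all add: aut_comp_def)

lemma aut_comp_eq_aut_idD:
  assumes "aut_comp h g = aut_id"
  shows "ce h (ce g x) = x" "cf h (cf g f) = f" "cfmap h (cf g f) (cfmap g f i) = i"
  using arg_cong[OF assms, of "\<lambda>a. ce a x"] arg_cong[OF assms, of "\<lambda>a. cf a f"]
    arg_cong[OF assms, of "\<lambda>a. cfmap a f i"]
  by (simp_all add: aut_id_def)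

lemma is_aut_edge: "is_aut X g \<Longrightarrow> x \<in> edges X \<Longrightarrow> ce g x \<in> edges X"
  unfolding is_aut_def by (meson bij_betw_apply)

lemma is_aut_face:
  assumes "is_aut X g" "f \<in> faces X"
  shows "cf g f \<in> faces X" "length (bd X (cf g f)) = length (bd X f)"
  using assms unfolding is_aut_def Let_def by (meson bij_betw_apply)+

lemma is_aut_bd_nth:
  assumes "is_aut X g" "f \<in> faces X" "j < length (bd X f)"
  shows "cfmap g f j < length (bd X f)"
    "fst (bd X (cf g f) ! cfmap g f j) = ce g (fst (bd X f ! j))"
proof -
  let ?n = "length (bd X f)"
  have A: "(\<exists>k<?n. \<forall>i<?n. cfmap g f i = dmap ?n k (cfrev g f) i) \<and>
        (\<forall>i<?n. bd X (cf g f) ! (cfmap g f i) = oe_flip (cfrev g f) (aut_oe g (bd X f ! i)))"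
    using assms unfolding is_aut_def Let_def by blast
  then obtain k where "\<forall>i<?n. cfmap g f i = dmap ?n k (cfrev g f) i" by blast
  moreover have "0 < ?n" using assms(3) by linarith
  ultimately show "cfmap g f j < ?n" using assms(3) by (simp add: dmap_def)
  show "fst (bd X (cf g f) ! cfmap g f j) = ce g (fst (bd X f ! j))"
    using A assms(3) by (simp add: oe_flip_def aut_oe_def)
qed

lemma aut_subgroup_inverse:
  "aut_subgroup X H \<Longrightarrow> h \<in> H \<Longrightarrow> \<exists>g\<in>H. aut_comp g h = aut_id \<and> aut_comp h g = aut_id"
  unfolding aut_subgroup_def by blast

lemma edge_orbit_ce:
  assumes "aut_subgroup X H" "h \<in> H"
  shows "edge_orbit H (ce h x) = edge_orbit H x"
proof -
  obtain g where g: "g \<in> H" "aut_comp g h = aut_id" using aut_subgroup_inverse[OF assms] by blast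
  have comp: "aut_comp k l \<in> H" if "k \<in> H" "l \<in> H" for k l
    using assms(1) that unfolding aut_subgroup_def by blast
  show ?thesis
  proof
    have "ce k (ce h x) = ce (aut_comp k h) x" for k by simp
    then show "edge_orbit H (ce h x) \<subseteq> edge_orbit H x"
      unfolding edge_orbit_def using comp[OF _ assms(2)] by blast
    have "ce k x = ce (aut_comp k g) (ce h x)" for k
      using aut_comp_eq_aut_idD(1)[OF g(2)] by simp
    then show "edge_orbit H x \<subseteq> edge_orbit H (ce h x)"
      unfolding edge_orbit_def using comp[OF _ g(1)] by blast
  qed
qed

definition orbit_rep :: "'a set \<Rightarrow> 'a" where
  "orbit_rep Ob = (SOME z. z \<in> Ob)"

lemma per_eq_sum_orbit_rep:
  "per X H Z = (\<Sum>Ob\<in>edge_orbit H ` ze Z. card (Missing X Z (orbit_rep Ob)))"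
  unfolding per_def orbit_rep_def ..

lemma orbit_rep_edge_orbit:
  assumes "aut_id \<in> H"
  shows "\<exists>h\<in>H. orbit_rep (edge_orbit H x) = ce h x"
proof -
  have "x \<in> edge_orbit H x" unfolding edge_orbit_def using assms by (force simp: aut_id_def)
  then have "orbit_rep (edge_orbit H x) \<in> edge_orbit H x" unfolding orbit_rep_def by (rule someI)
  then show ?thesis unfolding edge_orbit_def by blast
qed

lemma translate_notin_zf:
  assumes "aut_subgroup X H" "H_invariant H Y" "h \<in> H" "R \<notin> zf Y"
  shows "cf h R \<notin> zf Y"
proof
  assume "cf h R \<in> zf Y"
  obtain g where g: "g \<in> H" "aut_comp g h = aut_id" using aut_subgroup_inverse[OF assms(1,3)] by blast
  have "cf g (cf h R) \<in> zf Y" using assms(2) g(1) \<open>cf h R \<in> zf Y\<close> unfolding H_invariant_def by blast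
  then show False using aut_comp_eq_aut_idD(2)[OF g(2)] assms(4) by simp
qed

lemma edge_of_translate_bd:
  assumes "aut_subgroup X H" "h \<in> H" "R \<in> faces X" "x \<in> fst ` set (bd X (cf h R))"
  shows "\<exists>i<length (bd X R). x = ce h (fst (bd X R ! i))"
proof -
  have auts: "\<And>k. k \<in> H \<Longrightarrow> is_aut X k" using assms(1) unfolding aut_subgroup_def by blast
  obtain j where j: "j < length (bd X (cf h R))" "x = fst (bd X (cf h R) ! j)"
    using assms(4) by (metis imageE in_set_conv_nth)
  obtain g where g: "g \<in> H" "aut_comp g h = aut_id" "aut_comp h g = aut_id"
    using aut_subgroup_inverse[OF assms(1,2)] by blast
  note hR = is_aut_face[OF auts[OF assms(2)] assms(3)]
  note gface = is_aut_bd_nth[OF auts[OF g(1)] hR(1) j(1)]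
  let ?i = "cfmap g (cf h R) j"
  have "fst (bd X R ! ?i) = ce g x"
    using gface(2) aut_comp_eq_aut_idD(2)[OF g(2)] j(2) by simp
  then have "x = ce h (fst (bd X R ! ?i))" using aut_comp_eq_aut_idD(1)[OF g(3)] by simp
  moreover have "?i < length (bd X R)" using gface(1) hR(2) by simp
  ultimately show ?thesis by blast
qed

text \<open>The elements of a coset of \<open>Fix\<^sub>H(R)\<close> act identically on \<open>\<partial>R\<close>.\<close>

lemma card_stab_positions_le:
  assumes "aut_id \<in> H" "finite (aut_H X H R)" "i < length (bd X R)"
  shows "finite {cfmap g R i | g. g \<in> stab_H H R}"
    and "card {cfmap g R i | g. g \<in> stab_H H R} \<le> card (aut_H X H R)"
proof -
  let ?pos = "\<lambda>C. cfmap (SOME c. c \<in> C) R i"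
  have idfix: "aut_id \<in> fix_H X H R"
    unfolding fix_H_def fixes_cell_def using assms(1) by (simp add: aut_id_def)
  have sub: "{cfmap g R i | g. g \<in> stab_H H R} \<subseteq> ?pos ` aut_H X H R"
  proof
    fix v assume "v \<in> {cfmap g R i | g. g \<in> stab_H H R}"
    then obtain g where g: "g \<in> stab_H H R" "v = cfmap g R i" by blast
    define C where "C = aut_comp g ` fix_H X H R"
    have CA: "C \<in> aut_H X H R" unfolding aut_H_def C_def using g by blast
    have "aut_comp g aut_id \<in> C" unfolding C_def using idfix by blast
    then have "(SOME c. c \<in> C) \<in> C" by (rule someI)
    then obtain f where "f \<in> fix_H X H R" "(SOME c. c \<in> C) = aut_comp g f"
      unfolding C_def by blast
    then have "?pos C = v" using assms(3) g unfolding fix_H_def fixes_cell_def by simp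
    then show "v \<in> ?pos ` aut_H X H R" using CA by blast
  qed
  then show "finite {cfmap g R i | g. g \<in> stab_H H R}"
    using assms(2) finite_subset by blast
  have "card {cfmap g R i | g. g \<in> stab_H H R} \<le> card (?pos ` aut_H X H R)"
    using sub assms(2) by (intro card_mono) auto
  also have "\<dots> \<le> card (aut_H X H R)" using card_image_le assms(2) by blast
  finally show "card {cfmap g R i | g. g \<in> stab_H H R} \<le> card (aut_H X H R)" .
qed

lemma stab_position_of_equal_translates:
  assumes "aut_subgroup X H" "g \<in> H" "h \<in> H"
    and "cf g R = cf h R" "cfmap g R i = cfmap h R j"
  shows "j \<in> {cfmap k R i | k. k \<in> stab_H H R}"
proof -
  obtain h' where h': "h' \<in> H" "aut_comp h' h = aut_id"
    using aut_subgroup_inverse[OF assms(1,3)] by blast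
  define k where "k = aut_comp h' g"
  have "k \<in> H" unfolding k_def using assms(1,2) h'(1) unfolding aut_subgroup_def by blast
  moreover have "cf k R = R" unfolding k_def using aut_comp_eq_aut_idD(2)[OF h'(2)] assms(4) by simp
  moreover have "cfmap k R i = j"
    unfolding k_def using aut_comp_eq_aut_idD(3)[OF h'(2)] assms(4,5) by simp
  ultimately show ?thesis unfolding stab_H_def by blast
qed

lemma card_le_mult_card_image:
  assumes "finite P" "\<And>i. i \<in> P \<Longrightarrow> card {j \<in> P. f j = f i} \<le> k"
  shows "card P \<le> k * card (f ` P)"
proof -
  have "P = (\<Union>y\<in>f ` P. {j \<in> P. f j = y})" by auto
  then have "card P \<le> (\<Sum>y\<in>f ` P. card {j \<in> P. f j = y})"
    using card_UN_le[of "f ` P" "\<lambda>y. {j \<in> P. f j = y}"] assms(1) by simp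
  also have "\<dots> \<le> of_nat (card (f ` P)) * k" using assms(2) by (intro sum_bounded_above) auto
  finally show ?thesis by (simp add: mult.commute)
qed

lemma mset_rotate: "mset (rotate k xs) = mset xs"
  by (metis append_take_drop_id mset_append rotate_drop_take union_commute)

lemma mset_map_fst_bd_reading:
  assumes "Ls \<in> bd_readings X R"
  shows "mset (map fst Ls) = mset (map fst (bd X R))"
proof -
  have fst_flip: "fst \<circ> oe_flip True = (fst :: 'e \<times> bool \<Rightarrow> 'e)" by (auto simp: oe_flip_def)
  show ?thesis
    using assms unfolding bd_readings_def
    by (auto simp: rotate_map mset_rotate multiset.map_comp fst_flip simp flip: rev_map)
qed

locale enlargement_setting =
  fixes X :: "('v,'e,'f) complex2" and M :: nat
    and H :: "('v,'e,'f) caut set" and Y :: "('v,'e,'f) subcx" and R :: 'f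
  assumes complex: "complex2 X" and thin: "thin X M"
    and subgroup: "aut_subgroup X H"
    and subcomplex: "is_subcomplex X Y" and cocompact: "H_cocompact H Y"
    and face: "R \<in> faces X" and face_notin: "R \<notin> zf Y"
begin

abbreviation "Y' \<equiv> enlargement X H Y R"
abbreviation "n \<equiv> length (bd X R)"
abbreviation "e i \<equiv> fst (bd X R ! i)"

definition old_positions :: "nat set" where
  "old_positions = {i. i < n \<and> e i \<in> ze Y}"

definition new_positions :: "nat set" where
  "new_positions = {i. i < n \<and> e i \<notin> ze Y}"

definition gained_sides :: "('e set \<times> 'f \<times> nat) set" where
  "gained_sides = (SIGMA Ob : edge_orbit H ` ze Y.
     Missing X Y (orbit_rep Ob) - Missing X Y' (orbit_rep Ob))"

lemma is_aut: "h \<in> H \<Longrightarrow> is_aut X h"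
  using subgroup unfolding aut_subgroup_def by blast

lemma id_in: "aut_id \<in> H"
  using subgroup unfolding aut_subgroup_def by blast

lemma invariant: "H_invariant H Y"
  using cocompact unfolding H_cocompact_def by blast

lemma finite_orbits: "finite (edge_orbit H ` ze Y)"
  using cocompact unfolding H_cocompact_def by blast

lemma e_in_edges: "i < n \<Longrightarrow> e i \<in> edges X"
  using complex face unfolding complex2_def by (meson nth_mem)

lemma finite_Missing: "z \<in> edges X \<Longrightarrow> finite (Missing X Z z)"
  using thin unfolding thin_def Missing_def by auto

lemma one_le_M: "1 \<le> M"
proof -
  have n: "0 < n" using complex face unfolding complex2_def by auto
  then have "(R, 0) \<in> sides X (e 0)" using face unfolding sides_def by simp
  then show ?thesis using thin e_in_edges[OF n] unfolding thin_def
    by (metis One_nat_def card_gt_0_iff empty_iff less_eq_Suc_le order_trans)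
qed

lemma Missing_enlargement_subset: "Missing X Y' z \<subseteq> Missing X Y z"
  unfolding Missing_def lifts_to_def enlargement_def by auto

lemma translate_side_lifts:
  assumes "h \<in> H" "i < n"
  shows "(cf h R, cfmap h R i) \<in> sides X (ce h (e i))"
    and "lifts_to Y' (ce h (e i)) (cf h R, cfmap h R i)"
proof -
  note hface = is_aut_face[OF is_aut[OF assms(1)] face] is_aut_bd_nth[OF is_aut[OF assms(1)] face assms(2)]
  show "(cf h R, cfmap h R i) \<in> sides X (ce h (e i))"
    using hface unfolding sides_def by simp
  have "ce h (e i) \<in> fst ` set (bd X (cf h R))" using hface by (metis image_eqI nth_mem)
  then show "lifts_to Y' (ce h (e i)) (cf h R, cfmap h R i)"
    using assms(1) unfolding lifts_to_def enlargement_def by auto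
qed

lemma orbit_rep_in_ze: "Ob \<in> edge_orbit H ` ze Y \<Longrightarrow> orbit_rep Ob \<in> ze Y"
  using orbit_rep_edge_orbit[OF id_in] invariant unfolding H_invariant_def by blast

lemma orbit_rep_in_edges: "Ob \<in> edge_orbit H ` ze Y \<Longrightarrow> orbit_rep Ob \<in> edges X"
  using orbit_rep_in_ze subcomplex unfolding is_subcomplex_def by blast

lemma finite_gained_sides: "finite gained_sides"
  unfolding gained_sides_def
  using finite_orbits finite_Missing[OF orbit_rep_in_edges] by blast

lemma edge_orbits_enlargement:
  "edge_orbit H ` ze Y' \<subseteq> edge_orbit H ` ze Y \<union> (\<lambda>i. edge_orbit H (e i)) ` new_positions"
proof
  fix Ob assume "Ob \<in> edge_orbit H ` ze Y'"
  then obtain x where x: "x \<in> ze Y'" "Ob = edge_orbit H x" by blast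
  show "Ob \<in> edge_orbit H ` ze Y \<union> (\<lambda>i. edge_orbit H (e i)) ` new_positions"
  proof (cases "x \<in> ze Y")
    case False
    then obtain h where h: "h \<in> H" "x \<in> fst ` set (bd X (cf h R))"
      using x(1) unfolding enlargement_def by auto
    then obtain i where i: "i < n" "x = ce h (e i)"
      using edge_of_translate_bd[OF subgroup _ face] by blast
    have "e i \<notin> ze Y" using False h(1) i(2) invariant unfolding H_invariant_def by blast
    then have "i \<in> new_positions" using i(1) unfolding new_positions_def by simp
    moreover have "Ob = edge_orbit H (e i)" using x(2) i(2) edge_orbit_ce[OF subgroup h(1)] by simp
    ultimately show ?thesis by blast
  qed (use x in blast)
qed

lemma card_Missing_new_orbit:
  assumes "i < n"
  shows "card (Missing X Y' (orbit_rep (edge_orbit H (e i)))) \<le> M - 1"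
proof -
  obtain h where h: "h \<in> H" "orbit_rep (edge_orbit H (e i)) = ce h (e i)"
    using orbit_rep_edge_orbit[OF id_in] by blast
  let ?z = "ce h (e i)" and ?s = "(cf h R, cfmap h R i)"
  have z: "?z \<in> edges X" using is_aut_edge[OF is_aut[OF h(1)] e_in_edges[OF assms]] .
  have sides: "finite (sides X ?z)" "card (sides X ?z) \<le> M" using thin z unfolding thin_def by blast+
  have "Missing X Y' ?z \<subseteq> sides X ?z - {?s}"
    using translate_side_lifts[OF h(1) assms] unfolding Missing_def by auto
  then have "card (Missing X Y' ?z) \<le> card (sides X ?z - {?s})"
    using sides by (meson card_mono finite_Diff)
  also have "\<dots> \<le> M - 1"
    using sides translate_side_lifts(1)[OF h(1) assms] by simp
  finally show ?thesis using h(2) by simp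
qed

lemma per_enlargement_le:
  "per X H Y' + card gained_sides \<le> per X H Y + card new_positions * (M - 1)"
proof -
  let ?m = "\<lambda>Ob. card (Missing X Y' (orbit_rep Ob))"
  let ?Orbs = "edge_orbit H ` ze Y" and ?New = "(\<lambda>i. edge_orbit H (e i)) ` new_positions"
  have fin_new: "finite new_positions" unfolding new_positions_def by simp
  have "per X H Y' = sum ?m (edge_orbit H ` ze Y')" by (rule per_eq_sum_orbit_rep)
  also have "\<dots> \<le> sum ?m (?Orbs \<union> ?New)"
    using edge_orbits_enlargement finite_orbits fin_new by (intro sum_mono2) auto
  also have "\<dots> \<le> sum ?m ?Orbs + sum ?m ?New"
    using sum_Un_nat[of ?Orbs ?New ?m] finite_orbits fin_new by simp
  also have "sum ?m ?New \<le> card new_positions * (M - 1)"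
  proof -
    have "sum ?m ?New \<le> of_nat (card ?New) * (M - 1)"
      using card_Missing_new_orbit unfolding new_positions_def by (intro sum_bounded_above) auto
    also have "\<dots> \<le> card new_positions * (M - 1)"
      using card_image_le[OF fin_new, of "\<lambda>i. edge_orbit H (e i)"] by (simp add: mult_le_mono1)
    finally show ?thesis .
  qed
  moreover have "sum ?m ?Orbs + card gained_sides = per X H Y"
  proof -
    have "?m Ob + card (Missing X Y (orbit_rep Ob) - Missing X Y' (orbit_rep Ob))
        = card (Missing X Y (orbit_rep Ob))" if "Ob \<in> ?Orbs" for Ob
      using Missing_enlargement_subset finite_Missing[OF orbit_rep_in_edges[OF that]]
      by (simp add: card_Diff_subset card_mono)
    then show ?thesis
      unfolding gained_sides_def per_eq_sum_orbit_rep[of X H Y]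
      using finite_orbits finite_Missing orbit_rep_in_edges by (simp add: sum.distrib [symmetric])
  qed
  ultimately show ?thesis by linarith
qed

lemma card_old_positions_le:
  assumes "finite (aut_H X H R)"
  shows "card old_positions \<le> card (aut_H X H R) * card gained_sides"
proof -
  have "\<forall>i. \<exists>h. h \<in> H \<and> orbit_rep (edge_orbit H (e i)) = ce h (e i)"
    using orbit_rep_edge_orbit[OF id_in] by blast
  then obtain hh where "\<forall>i. hh i \<in> H \<and> orbit_rep (edge_orbit H (e i)) = ce (hh i) (e i)"
    by (rule choice[THEN exE])
  then have hh: "\<And>i. hh i \<in> H" "\<And>i. orbit_rep (edge_orbit H (e i)) = ce (hh i) (e i)"
    by blast+
  define \<phi> where "\<phi> i = (edge_orbit H (e i), cf (hh i) R, cfmap (hh i) R i)" for i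
  have fin_old: "finite old_positions" unfolding old_positions_def by simp
  have "\<phi> i \<in> gained_sides" if "i \<in> old_positions" for i
  proof -
    have i: "i < n" "e i \<in> ze Y" using that unfolding old_positions_def by auto
    have "cf (hh i) R \<notin> zf Y" using translate_notin_zf[OF subgroup invariant hh(1) face_notin] .
    then have "(cf (hh i) R, cfmap (hh i) R i) \<in>
        Missing X Y (orbit_rep (edge_orbit H (e i))) - Missing X Y' (orbit_rep (edge_orbit H (e i)))"
      using translate_side_lifts[OF hh(1) i(1)] unfolding hh(2) Missing_def lifts_to_def by simp
    then show ?thesis using i(2) unfolding gained_sides_def \<phi>_def by blast
  qed
  then have "card (\<phi> ` old_positions) \<le> card gained_sides"
    using finite_gained_sides by (intro card_mono) auto
  moreover have "card old_positions \<le> card (aut_H X H R) * card (\<phi> ` old_positions)"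
  proof (rule card_le_mult_card_image[OF fin_old])
    fix i assume "i \<in> old_positions"
    then have "i < n" unfolding old_positions_def by simp
    note stab = card_stab_positions_le[OF id_in assms this]
    have "{j \<in> old_positions. \<phi> j = \<phi> i} \<subseteq> {cfmap g R i | g. g \<in> stab_H H R}"
    proof clarify
      fix j assume "\<phi> j = \<phi> i"
      then have "cf (hh i) R = cf (hh j) R" "cfmap (hh i) R i = cfmap (hh j) R j"
        unfolding \<phi>_def by simp_all
      then show "\<exists>g. j = cfmap g R i \<and> g \<in> stab_H H R"
        using stab_position_of_equal_translates[OF subgroup hh(1) hh(1)] by blast
    qed
    then show "card {j \<in> old_positions. \<phi> j = \<phi> i} \<le> card (aut_H X H R)"
      using stab by (meson card_mono le_trans)
  qed
  ultimately show ?thesis by (meson mult_le_mono2 le_trans)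
qed

lemma card_old_new_positions: "card old_positions + card new_positions = n"
proof -
  have "old_positions \<union> new_positions = {..<n}" "old_positions \<inter> new_positions = {}"
    unfolding old_positions_def new_positions_def by auto
  then show ?thesis
    using card_Un_disjoint[of old_positions new_positions]
    unfolding old_positions_def new_positions_def by simp
qed

lemma card_new_positions_le:
  assumes "missing_3shell X Y R Q S"
  shows "card new_positions \<le> length S"
proof -
  let ?out = "\<lambda>x. x \<notin> ze Y"
  have QY: "set (map fst Q) \<subseteq> ze Y" and rd: "Q @ S \<in> bd_readings X R"
    using assms unfolding missing_3shell_def by blast+
  have "card new_positions = length (filter ?out (map fst (bd X R)))"
    unfolding length_filter_conv_card new_positions_def by (intro arg_cong[where f = card]) auto
  also have "\<dots> = length (filter ?out (map fst (Q @ S)))"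
    by (metis mset_map_fst_bd_reading[OF rd] mset_filter size_mset)
  also have "\<dots> = length (filter ?out (map fst S))"
    using QY by (auto simp: filter_empty_conv)
  also have "\<dots> \<le> length S" by (metis length_filter_le length_map)
  finally show ?thesis .
qed

end

lemma density_bounds_imp_mult_lt:
  fixes lam :: real
  assumes "lam > 0" "real l < 3 * lam * real n" "3 * lam * real M < 1 / real A"
  shows "0 < A" and "A * M * l < n"
proof -
  show A: "0 < A"
    using assms(1,3) by (cases "A = 0") (auto simp: mult_less_0_iff)
  have "real A * real M * real l \<le> real A * real M * (3 * lam * real n)"
    using assms(2) by (intro mult_left_mono) auto
  also have "\<dots> = (3 * lam * real M * real A) * real n" by simp
  also have "\<dots> < real n"
  proof -
    have "0 < real n" using assms(2) by (cases "n = 0") auto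
    moreover have "3 * lam * real M * real A < 1" using assms(3) A by (simp add: field_simps)
    ultimately show ?thesis by simp
  qed
  finally show "A * M * l < n" by (simp flip: of_nat_mult)
qed

lemma gain_exceeds_loss:
  fixes A M l p p' g :: nat
  assumes "A * M * l < p + p'" "p' \<le> l" "p \<le> A * g" "1 \<le> M" "0 < A"
  shows "p' * (M - 1) < g"
proof -
  have "p' \<le> A * p'" using assms(5) by simp
  then have "A * ((M - 1) * p') + p' \<le> A * M * p'"
    using assms(4) by (cases M) (auto simp: algebra_simps)
  also have "\<dots> \<le> A * M * l" using assms(2) by simp
  finally have "A * ((M - 1) * p') < A * g" using assms(1,3) by linarith
  then show ?thesis by (simp add: mult.commute)
qed

theorem lemma3p17:
  fixes X :: "('v,'e,'f) complex2" and M :: nat and lam :: real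
    and H :: "('v,'e,'f) caut set" and Y :: "('v,'e,'f) subcx" and R :: 'f
    and Q S :: "('e \<times> bool) list"
  assumes "complex2 X" and "thin X M" and "lam > 0"
    and "aut_subgroup X H"
    and "is_subcomplex X Y" and "H_cocompact H Y"
    and "missing_3shell X Y R Q S"
    and "real (length S) < 3 * lam * real (length (bd X R))"
    and "3 * lam * real M < 1 / real (card (aut_H X H R))"
  shows "per X H (enlargement X H Y R) < per X H Y"
proof -
  interpret enlargement_setting X M H Y R
    using assms(1,2,4-7) unfolding missing_3shell_def by unfold_locales blast+
  note A = density_bounds_imp_mult_lt[OF assms(3,8,9)]
  have finite: "finite (aut_H X H R)" using A(1) card.infinite by fastforce
  have "card new_positions * (M - 1) < card gained_sides"
    using gain_exceeds_loss[OF _ card_new_positions_le[OF assms(7)]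
        card_old_positions_le[OF finite] one_le_M A(1)] A(2) card_old_new_positions
    by simp
  then show ?thesis using per_enlargement_le by linarith
qed

end
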